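(* Assume $\Omega_{\mathrm O}$ and $\Omega_{\mathrm I}$ satisfy the standing assumptions (1)–(5). Then for every $\psi\in\boldsymbol{A}^{\circ}_\Omega$ one has $\langle\psi\rangle_{\mathbb T}\notin\operatorname{int}\operatorname{conv}\Omega_{\mathrm I}$.
   Context: Let $d\ge1$. $\Omega_{\mathrm O}\subset\mathbb R^d$ is a nonempty open strictly convex set and $\Omega_{\mathrm I}\subset\Omega_{\mathrm O}$ is a closed set; $\operatorname{conv}$, $\operatorname{int}$, $\operatorname{cl}$, $\partial$ denote convex hull, interior, closure, boundary. A ray is a set $\{x+te: t\ge0\}$ with $e\ne0$. The standing assumptions are: (1) $\partial\operatorname{conv}\Omega_{\mathrm I}$ contains no rays; (2) $\operatorname{cl}\operatorname{conv}\Omega_{\mathrm I}\subset\Omega_{\mathrm O}$; (3) $\operatorname{int}\operatorname{conv}\Omega_{\mathrm I}\ne\varnothing$ and $\Omega_{\mathrm O}$ and $\operatorname{conv}\Omega_{\mathrm I}$ have congruent maximal inscribed cones (the set of directions $e$ such that some ray $\{x+te:t\ge0\}$ is contained in the set is the same for both sets); (4) the set $(\operatorname{int}\operatorname{conv}\Omega_{\mathrm I})\setminus\Omega_{\mathrm I}$ is a locally finite union of its connected components $\omega_j$ (every bounded subset of $\mathbb R^d$ meets only finitely many $\omega_j$); (5) for every $j$ there is a supporting hyperplane $L_j$ to $\operatorname{conv}\Omega_{\mathrm I}$ that contains $E_j:=\partial\omega_j\setminus\Omega_{\mathrm I}$. Set $\Omega=\operatorname{cl}\Omega_{\mathrm O}\setminus\Omega_{\mathrm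 I}$. For a Borel set $E$ of finite positive measure and an $\mathbb R^d$-valued summable function $\psi$, $\langle\psi\rangle_E=|E|^{-1}\int_E\psi$ (coordinate-wise). $\mathbb T=\mathbb R/\mathbb Z$; a function $\psi$ on $\mathbb T$ is identified with its $1$-periodic version $\psi_{\mathrm{per}}$ on $\mathbb R$, and $\langle\psi\rangle_{\mathbb T}=\int_0^1\psi_{\mathrm{per}}$. Define $\boldsymbol{A}^{\circ}_\Omega=\{\psi\in L_1(\mathbb T,\mathbb R^d): \psi(x)\in\partial\Omega_{\mathrm O}\ \forall x\in\mathbb T,\ \langle\psi_{\mathrm{per}}\rangle_J\notin\Omega_{\mathrm I}\text{ for every bounded interval }J\subset\mathbb R\}$. *)

theory Defs
  imports "HOL-Analysis.Analysis"
begin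

definition strictly_convex_set :: "'a::euclidean_space set \<Rightarrow> bool" where
  "strictly_convex_set S \<longleftrightarrow> convex S \<and>
     (\<forall>x\<in>closure S. \<forall>y\<in>closure S. x \<noteq> y \<longrightarrow> open_segment x y \<subseteq> interior S)"

definition ray :: "'a::euclidean_space \<Rightarrow> 'a \<Rightarrow> 'a set" where
  "ray x e = {x + t *\<^sub>R e | t. t \<ge> 0}"

definition ray_directions :: "'a::euclidean_space set \<Rightarrow> 'a set" where
  "ray_directions S = {e. e \<noteq> 0 \<and> (\<exists>x. ray x e \<subseteq> S)}"

definition supporting_hyperplane :: "'a::euclidean_space set \<Rightarrow> 'a set \<Rightarrow> bool" where
  "supporting_hyperplane C L \<longleftrightarrow> (\<exists>a b. a \<noteq> 0 \<and> L = {y. a \<bullet> y = b} \<and>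
     (\<forall>y\<in>C. a \<bullet> y \<le> b) \<and> (\<exists>y\<in>closure C. a \<bullet> y = b))"

definition standing_assumptions :: "'a::euclidean_space set \<Rightarrow> 'a set \<Rightarrow> bool" where
  "standing_assumptions OmO OmI \<longleftrightarrow>
     OmO \<noteq> {} \<and> open OmO \<and> strictly_convex_set OmO \<and> closed OmI \<and> OmI \<subseteq> OmO \<and>
     \<comment> \<open>(1)\<close>
     \<not> (\<exists>x e. e \<noteq> 0 \<and> ray x e \<subseteq> frontier (convex hull OmI)) \<and>
     \<comment> \<open>(2)\<close>
     closure (convex hull OmI) \<subseteq> OmO \<and>
     \<comment> \<open>(3)\<close>
     interior (convex hull OmI) \<noteq> {} \<and>
     ray_directions OmO = ray_directions (convex hull OmI) \<and>
     \<comment> \<open>(4)\<close>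
     (\<forall>B. bounded B \<longrightarrow>
        finite {w \<in> components (interior (convex hull OmI) - OmI). w \<inter> B \<noteq> {}}) \<and>
     \<comment> \<open>(5)\<close>
     (\<forall>w \<in> components (interior (convex hull OmI) - OmI).
        \<exists>L. supporting_hyperplane (convex hull OmI) L \<and> frontier w - OmI \<subseteq> L)"

definition average :: "real set \<Rightarrow> (real \<Rightarrow> 'a::euclidean_space) \<Rightarrow> 'a" where
  "average E psi = (1 / measure lebesgue E) *\<^sub>R integral E psi"

text \<open>The class A-circ: functions on T = R/Z, represented by their 1-periodic versions
on R, summable over a period, with values in the boundary of OmO, and such that
averages over all bounded intervals of positive length avoid OmI.\<close>
definition A_circ :: "'a::euclidean_space set \<Rightarrow> 'a set \<Rightarrow> (real \<Rightarrow> 'a) set" where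
  "A_circ OmO OmI = {psi.
     (\<forall>x. psi (x + 1) = psi x) \<and>
     psi absolutely_integrable_on {0..1} \<and>
     (\<forall>x. psi x \<in> frontier OmO) \<and>
     (\<forall>a b. a < b \<longrightarrow> average {a..b} psi \<notin> OmI)}"

end

theory Submission
  imports Defs
begin

text \<open>Suppose the mean \<open>x\<^sub>0\<close> of \<open>psi\<close> lay in \<open>int conv \<Omega>\<^sub>I\<close>. Since \<open>x\<^sub>0 \<notin> \<Omega>\<^sub>I\<close>,
it lies in a component \<open>\<omega>\<close> of \<open>int conv \<Omega>\<^sub>I - \<Omega>\<^sub>I\<close>, and by (5) there is a supporting
hyperplane \<open>l \<bullet> y = b\<close> with \<open>\<omega>\<close> strictly below it and \<open>\<partial>\<omega> - \<Omega>\<^sub>I\<close> on it. The scalar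
function \<open>g = l \<bullet> psi - b\<close> has negative mean. At a point \<open>a\<close> where \<open>\<integral>\<^sub>a\<^sup>t g < 0\<close> for
all \<open>t > a\<close>, the averages of \<open>psi\<close> over \<open>[a,t]\<close> stay strictly below the hyperplane and
avoid \<open>\<Omega>\<^sub>I\<close>, so they never meet \<open>\<partial>\<omega>\<close>; as the average over \<open>[a,a+1]\<close> is \<open>x\<^sub>0 \<in> \<omega>\<close>,
all of them lie in \<open>\<omega>\<close>. If \<open>a\<close> is a Lebesgue point, letting \<open>t \<rightarrow> a\<close> gives
\<open>psi a \<in> cl \<omega> \<subseteq> \<Omega>\<^sub>O\<close>, contradicting \<open>psi a \<in> \<partial>\<Omega>\<^sub>O\<close>. Hence these points form a null set.
But by the rising sun lemma the primitive of \<open>g\<close> maps them onto an interval of positive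
length, while, being absolutely continuous, it maps null sets to null sets.\<close>

lemma integral_truncations_tendsto:
  fixes h :: "'a::euclidean_space \<Rightarrow> real"
  assumes S: "S \<in> lmeasurable" and h: "h absolutely_integrable_on S" and h0: "\<And>x. 0 \<le> h x"
  shows "(\<lambda>k::nat. integral S (\<lambda>x. min (h x) (real k))) \<longlonglongrightarrow> integral S h"
proof -
  have trunc: "(\<lambda>x. min (h x) (real k)) absolutely_integrable_on S" for k
    using absolutely_integrable_min[OF h absolutely_integrable_on_const[OF S, of "real k"]] by simp
  have "h integrable_on S \<and> (\<lambda>k. integral S (\<lambda>x. min (h x) (real k))) \<longlonglongrightarrow> integral S h"
  proof (rule monotone_convergence_increasing)
    show "(\<lambda>x. min (h x) (real k)) integrable_on S" for k
      using trunc set_lebesgue_integral_eq_integral(1) by blast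
    show "min (h x) (real k) \<le> min (h x) (real (Suc k))" for k x
      by auto
    show "(\<lambda>k. min (h x) (real k)) \<longlonglongrightarrow> h x" for x
    proof (rule tendsto_eventually)
      obtain N :: nat where "h x \<le> N" using real_arch_simple by blast
      then show "\<forall>\<^sub>F k in sequentially. min (h x) (real k) = h x"
        unfolding eventually_sequentially by (intro exI[of _ N]) auto
    qed
    have "\<bar>integral S (\<lambda>x. min (h x) (real k))\<bar> \<le> integral S h" for k
    proof -
      have "0 \<le> integral S (\<lambda>x. min (h x) (real k))"
        using trunc h0 by (intro integral_nonneg) (auto simp: set_lebesgue_integral_eq_integral(1))
      moreover have "integral S (\<lambda>x. min (h x) (real k)) \<le> integral S h"
        using trunc h by (intro integral_le) (auto simp: set_lebesgue_integral_eq_integral(1))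
      ultimately show ?thesis by simp
    qed
    then show "bounded (range (\<lambda>k. integral S (\<lambda>x. min (h x) (real k))))"
      unfolding bounded_iff by auto
  qed
  then show ?thesis by blast
qed

lemma absolutely_continuous_integral:
  fixes h :: "'a::euclidean_space \<Rightarrow> real"
  assumes S: "S \<in> lmeasurable" and h: "h absolutely_integrable_on S" and h0: "\<And>x. 0 \<le> h x"
    and e: "e > 0"
  obtains d where "d > 0"
    "\<And>U. U \<in> lmeasurable \<Longrightarrow> U \<subseteq> S \<Longrightarrow> measure lebesgue U < d \<Longrightarrow> integral U h < e"
proof -
  define f where "f = (\<lambda>k::nat. \<lambda>x. min (h x) (real k))"
  have f: "f k absolutely_integrable_on S" for k
    using absolutely_integrable_min[OF h absolutely_integrable_on_const[OF S, of "real k"]]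
    by (simp add: f_def)
  obtain k where "\<bar>integral S (f k) - integral S h\<bar> < e/2"
    using LIMSEQ_D[OF integral_truncations_tendsto[OF S h h0] half_gt_zero[OF e]]
    unfolding f_def real_norm_def by blast
  then have k: "integral S h - integral S (f k) < e/2" by linarith
  \<comment> \<open>Below height \<open>k\<close> the integral over \<open>U\<close> is at most \<open>k |U|\<close>; above it, at most \<open>e/2\<close> for every \<open>U\<close>.\<close>
  define d where "d = e / (2 * (real k + 1))"
  show ?thesis
  proof
    show "d > 0" using e by (simp add: d_def)
    fix U assume U: "U \<in> lmeasurable" "U \<subseteq> S" "measure lebesgue U < d"
    have int_on: "g integrable_on U \<and> g integrable_on S"
      if "g absolutely_integrable_on S" for g :: "'a \<Rightarrow> real"
      using set_integrable_subset[OF that fmeasurableD[OF U(1)] U(2)] that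
      by (simp add: set_lebesgue_integral_eq_integral(1))
    have diff: "(\<lambda>x. h x - f k x) absolutely_integrable_on S"
      using h f by (rule set_integral_diff(1))
    have "integral U (f k) \<le> integral U (\<lambda>x. real k)"
      using int_on[OF f] integrable_on_const[OF U(1)] by (intro integral_le) (auto simp: f_def)
    also have "\<dots> = real k * measure lebesgue U"
      using lmeasure_integral[OF U(1)] integral_mult_right[of U "real k" "\<lambda>x. 1::real"] by simp
    also have "\<dots> \<le> real k * d"
      using U(3) by (intro mult_left_mono) auto
    also have "\<dots> \<le> e/2"
      using e by (simp add: d_def field_simps)
    finally have small_trunc: "integral U (f k) \<le> e/2" .
    have "integral U (\<lambda>x. h x - f k x) \<le> integral S (\<lambda>x. h x - f k x)"
      using int_on[OF diff] U(2) by (intro integral_subset_le) (auto simp: f_def)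
    also have "\<dots> = integral S h - integral S (f k)"
      using int_on[OF h] int_on[OF f] by (simp add: integral_diff)
    finally have "integral U (\<lambda>x. h x - f k x) < e/2" using k by linarith
    then show "integral U h < e"
      using small_trunc int_on[OF h] int_on[OF f] by (simp add: integral_diff)
  qed
qed

lemma negligible_Int_cbox_if_interiors_disjoint:
  fixes a b c d :: "'a::euclidean_space"
  assumes "interior (cbox a b) \<inter> interior (cbox c d) = {}"
  shows "negligible (cbox a b \<inter> cbox c d)"
  using assms by (simp add: Int_interval box_Int_box negligible_interval(1))

lemma sum_integral_le_integral_Union:
  fixes h :: "'a::euclidean_space \<Rightarrow> real"
  assumes h: "h absolutely_integrable_on S" and h0: "\<And>x. 0 \<le> h x"
    and \<D>: "finite \<D>" "\<Union>\<D> \<subseteq> S" "\<And>K. K \<in> \<D> \<Longrightarrow> \<exists>a b. K = cbox a b"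
    and disjoint: "pairwise (\<lambda>K L. interior K \<inter> interior L = {}) \<D>"
  shows "(\<Sum>K\<in>\<D>. integral K h) \<le> integral S h"
proof -
  have lebesgue: "K \<in> sets lebesgue" if "K \<in> \<D>" for K
    using \<D>(3)[OF that] by auto
  have int_on: "h integrable_on T" if "T \<in> sets lebesgue" "T \<subseteq> S" for T
    using set_integrable_subset[OF h that] by (simp add: set_lebesgue_integral_eq_integral(1))
  have "(h has_integral (\<Sum>K\<in>\<D>. integral K h)) (\<Union>\<D>)"
  proof (rule has_integral_Union[OF \<D>(1)])
    show "(h has_integral integral K h) K" if "K \<in> \<D>" for K
      using int_on[OF lebesgue[OF that]] \<D>(2) that by (intro integrable_integral) blast
    show "pairwise (\<lambda>K L. negligible (K \<inter> L)) \<D>"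
    proof (rule pairwiseI)
      fix K L assume KL: "K \<in> \<D>" "L \<in> \<D>" "K \<noteq> L"
      obtain a b c d where "K = cbox a b" "L = cbox c d"
        using \<D>(3) KL by blast
      with pairwiseD[OF disjoint KL] show "negligible (K \<inter> L)"
        by (simp add: negligible_Int_cbox_if_interiors_disjoint)
    qed
  qed
  then have "(\<Sum>K\<in>\<D>. integral K h) = integral (\<Union>\<D>) h"
    by (simp add: integral_unique)
  also have "\<dots> \<le> integral S h"
  proof (rule integral_subset_le)
    have "\<Union>\<D> \<in> sets lebesgue" using \<D>(1) lebesgue by blast
    then show "h integrable_on \<Union>\<D>" using int_on \<D>(2) by blast
    show "h integrable_on S" using h set_lebesgue_integral_eq_integral(1) by blast
  qed (use \<D>(2) h0 in auto)
  finally show ?thesis .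
qed

lemma negligible_image_if_integral_dominated:
  fixes h \<phi> :: "real \<Rightarrow> real"
  assumes h: "h absolutely_integrable_on {\<alpha>..\<beta>}" and h0: "\<And>x. 0 \<le> h x"
    and dominated: "\<And>x y. \<alpha> \<le> x \<Longrightarrow> x \<le> y \<Longrightarrow> y \<le> \<beta> \<Longrightarrow> \<bar>\<phi> y - \<phi> x\<bar> \<le> integral {x..y} h"
    and E: "E \<subseteq> {\<alpha>..\<beta>}" "negligible E"
  shows "negligible (\<phi> ` E)"
  unfolding negligible_outer_le
proof (intro allI impI)
  fix e :: real assume "e > 0"
  obtain d where d: "d > 0"
    "\<And>U. U \<in> lmeasurable \<Longrightarrow> U \<subseteq> {\<alpha>..\<beta>} \<Longrightarrow> measure lebesgue U < d \<Longrightarrow> integral U h < e/2"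
    using absolutely_continuous_integral[OF _ h h0 half_gt_zero[OF \<open>e > 0\<close>]] by auto
  have E_box: "E \<in> lmeasurable" "E \<subseteq> cbox \<alpha> \<beta>" and E0: "measure lebesgue E = 0"
    using E negligible_imp_measurable negligible_imp_measure0 by auto
  obtain \<D> where \<D>: "countable \<D>"
        "\<And>K. K \<in> \<D> \<Longrightarrow> K \<subseteq> cbox \<alpha> \<beta> \<and> K \<noteq> {} \<and> (\<exists>c d. K = cbox c d)"
        "pairwise (\<lambda>A B. interior A \<inter> interior B = {}) \<D>"
        "E \<subseteq> \<Union>\<D>" "\<Union>\<D> \<in> lmeasurable" "measure lebesgue (\<Union>\<D>) \<le> measure lebesgue E + d/2"
    by (rule measurable_outer_intervals_bounded[OF E_box half_gt_zero[OF d(1)]]) blast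
  have "measure lebesgue (\<Union>\<D>) < d" using \<D>(6) E0 d(1) by linarith
  have \<D>_sub: "\<Union>\<D> \<subseteq> {\<alpha>..\<beta>}" using \<D>(2) by auto
  define I where "I = (\<lambda>K. cball (\<phi> (Inf K)) (integral K h))"
  have image_in_ball: "\<phi> x \<in> I K" if "K \<in> \<D>" "x \<in> K" for K x
  proof -
    obtain c d where K: "K = {c..d}" "\<alpha> \<le> c" "c \<le> x" "x \<le> d" "d \<le> \<beta>"
      using \<D>(2)[OF \<open>K \<in> \<D>\<close>] \<open>x \<in> K\<close> by fastforce
    have "\<bar>\<phi> x - \<phi> c\<bar> \<le> integral {c..x} h" using dominated K by auto
    also have "\<dots> \<le> integral {c..d} h"
      using K(2-5) h0 integrable_on_subinterval[OF set_lebesgue_integral_eq_integral(1)[OF h]]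
      by (intro integral_subset_le) auto
    finally have "\<bar>\<phi> x - \<phi> c\<bar> \<le> integral K h" using K(1) by simp
    moreover have "Inf K = c" using K by simp
    ultimately show ?thesis by (simp add: I_def dist_real_def abs_minus_commute)
  qed
  have I_measure: "measure lebesgue (I K) \<le> 2 * integral K h" for K
  proof -
    have "0 \<le> integral K h"
      by (cases "h integrable_on K") (auto simp: integral_nonneg h0 not_integrable_integral)
    then show ?thesis by (simp add: I_def cball_eq_atLeastAtMost)
  qed
  have small: "measure lebesgue (\<Union>K\<in>\<F>. I K) \<le> e" if "\<F> \<subseteq> \<D>" "finite \<F>" for \<F>
  proof -
    have "measure lebesgue (\<Union>K\<in>\<F>. I K) \<le> (\<Sum>K\<in>\<F>. measure lebesgue (I K))"
      using that by (intro measure_UNION_le) (auto simp: I_def)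
    also have "\<dots> \<le> (\<Sum>K\<in>\<F>. 2 * integral K h)"
      by (intro sum_mono I_measure)
    also have "\<dots> \<le> 2 * integral (\<Union>\<D>) h"
    proof -
      have "(\<Sum>K\<in>\<F>. integral K h) \<le> integral (\<Union>\<D>) h"
        using that \<D>(2,3) pairwise_subset[OF \<D>(3) \<open>\<F> \<subseteq> \<D>\<close>]
          set_integrable_subset[OF h fmeasurableD[OF \<D>(5)] \<D>_sub]
        by (intro sum_integral_le_integral_Union) (auto simp: h0)
      then show ?thesis by (simp add: sum_distrib_left[symmetric])
    qed
    also have "\<dots> < e"
      using d(2)[OF \<D>(5) \<D>_sub \<open>measure lebesgue (\<Union>\<D>) < d\<close>] by linarith
    finally show ?thesis by simp
  qed
  show "\<exists>T. \<phi> ` E \<subseteq> T \<and> T \<in> lmeasurable \<and> measure lebesgue T \<le> e"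
  proof (intro exI conjI)
    show "\<phi> ` E \<subseteq> (\<Union>K\<in>\<D>. I K)" using \<D>(4) image_in_ball by blast
    show "(\<Union>K\<in>\<D>. I K) \<in> lmeasurable"
      by (rule fmeasurable_UN_bound[OF \<D>(1) _ small]) (auto simp: I_def)
    show "measure lebesgue (\<Union>K\<in>\<D>. I K) \<le> e"
      by (rule measure_UN_bound[OF \<D>(1) _ small]) (auto simp: I_def)
  qed
qed

lemma periodic_shift_nat:
  assumes per: "\<And>x. f (x + 1) = f x"
  shows "f (x + real n) = f x"
proof (induction n)
  case (Suc n)
  have "f (x + real (Suc n)) = f ((x + real n) + 1)" by (simp add: algebra_simps)
  then show ?case using per Suc by simp
qed simp

lemma periodic_shift_int:
  assumes per: "\<And>x. f (x + 1) = f x"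
  shows "f (x + real_of_int k) = f x"
proof (cases "k \<ge> 0")
  case True
  then show ?thesis using periodic_shift_nat[of f, OF per, of x "nat k"] by simp
next
  case False
  then have "f (x + real_of_int k) = f ((x + real_of_int k) + real (nat (- k)))"
    using periodic_shift_nat[of f, OF per] by presburger
  also have "\<dots> = f x" using False by simp
  finally show ?thesis .
qed

lemma periodic_integrable_on_interval:
  fixes g :: "real \<Rightarrow> 'b::banach"
  assumes per: "\<And>x. g (x + 1) = g x" and g: "g integrable_on {0..1}"
  shows "g integrable_on {a..b}"
proof -
  have initial: "g integrable_on {0..real n}" for n
  proof (induction n)
    case (Suc n)
    have "g \<circ> (+) (real n) = g" by (rule ext) (simp add: periodic_shift_nat[of g, OF per] add.commute)
    then have "g integrable_on {real n .. real (Suc n)}"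
      using integrable_on_shift_Icc_real[of g "real n" 0 1] g by (simp add: add.commute)
    with Suc show ?case
      using Henstock_Kurzweil_Integration.integrable_combine[of 0 "real n" "real (Suc n)" g] by simp
  qed (use integrable_on_refl[of g 0] in simp)
  define k where "k = - \<lfloor>a\<rfloor>"
  have k: "0 \<le> a + k" unfolding k_def by linarith
  obtain n :: nat where n: "b + k \<le> real n" using real_arch_simple by blast
  have "g \<circ> (+) (real_of_int k) = g" by (rule ext) (simp add: periodic_shift_int[of g, OF per] add.commute)
  moreover have "g integrable_on {a + k .. b + k}"
    using integrable_on_subinterval[OF initial[of n]] k n by auto
  ultimately show ?thesis using integrable_on_shift_Icc_real[of g "real_of_int k" a b] by simp
qed

lemma periodic_absolutely_integrable_on_interval:
  fixes g :: "real \<Rightarrow> 'b::euclidean_space"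
  assumes per: "\<And>x. g (x + 1) = g x" and g: "g absolutely_integrable_on {0..1}"
  shows "g absolutely_integrable_on {a..b}"
  using g periodic_integrable_on_interval[of g] periodic_integrable_on_interval[of "\<lambda>x. norm (g x)"] per
  unfolding absolutely_integrable_on_def by auto

lemma periodic_integral_unit_interval:
  fixes g :: "real \<Rightarrow> 'b::banach"
  assumes per: "\<And>x. g (x + 1) = g x" and g: "g integrable_on {0..1}"
  shows "integral {a..a+1} g = integral {0..1} g"
proof -
  define r where "r = a - \<lfloor>a\<rfloor>"
  have r: "0 \<le> r" "r \<le> 1" unfolding r_def by linarith+
  have shift: "integral {x+c..y+c} g = integral {x..y} g" if "g \<circ> (+) c = g" for x y c
    using integral_shift_Icc_real[of x y g c] that by simp
  have int: "g integrable_on {x..y}" for x y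
    using periodic_integrable_on_interval[OF per g] .
  have "integral {a..a+1} g = integral {r..r+1} g"
    using shift[of "real_of_int \<lfloor>a\<rfloor>" r "r+1"] periodic_shift_int[of g, OF per]
    by (simp add: r_def fun_eq_iff add.commute)
  also have "\<dots> = integral {r..1} g + integral {1..1+r} g"
    using Henstock_Kurzweil_Integration.integral_combine[OF _ _ int, of r 1 "r+1"] r
    by (simp add: add.commute)
  also have "integral {1..1+r} g = integral {0..r} g"
    using shift[of 1 0 r] per by (simp add: fun_eq_iff add.commute)
  also have "integral {r..1} g + integral {0..r} g = integral {0..1} g"
    using Henstock_Kurzweil_Integration.integral_combine[OF _ _ int, of 0 r 1] r by (simp add: add.commute)
  finally show ?thesis .
qed

lemma last_level_point:
  fixes \<phi> :: "real \<Rightarrow> real"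
  assumes cont: "continuous_on {s..s'} \<phi>" and "s \<le> s'" and v: "\<phi> s' \<le> v" "v \<le> \<phi> s"
    and beyond: "\<And>t. s' < t \<Longrightarrow> \<phi> t < v"
  obtains a where "a \<in> {s..s'}" "\<phi> a = v" "\<And>t. a < t \<Longrightarrow> \<phi> t < \<phi> a"
proof -
  define Y where "Y = {t \<in> {s..s'}. \<phi> t = v}"
  have Y_ne: "Y \<noteq> {}"
    using IVT2'[of \<phi> s' v s] cont \<open>s \<le> s'\<close> v by (auto simp: Y_def)
  have Y_bdd: "bdd_above Y" by (auto simp: Y_def bdd_above_def)
  have "closed Y"
    using continuous_closed_preimage_constant[OF cont] by (simp add: Y_def)
  then have aY: "Sup Y \<in> Y" using closed_contains_Sup[OF Y_ne Y_bdd] by simp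
  have "\<phi> t < v" if "Sup Y < t" for t
  proof (cases "t \<le> s'")
    case True
    show ?thesis
    proof (rule ccontr)
      assume "\<not> \<phi> t < v"
      moreover have "s \<le> t" using that aY by (auto simp: Y_def)
      ultimately obtain t' where "t' \<in> {t..s'}" "\<phi> t' = v"
        using IVT2'[of \<phi> s' v t] v True continuous_on_subset[OF cont, of "{t..s'}"] by auto
      then have "t' \<in> Y" using \<open>s \<le> t\<close> by (auto simp: Y_def)
      then show False using cSup_upper[OF _ Y_bdd] \<open>t' \<in> {t..s'}\<close> that by fastforce
    qed
  qed (use beyond in auto)
  then show ?thesis using that aY by (auto simp: Y_def)
qed

lemma drift_shift_nat:
  fixes \<phi> :: "real \<Rightarrow> real"
  assumes drift: "\<And>t. 0 \<le> t \<Longrightarrow> \<phi> (t + 1) = \<phi> t + m" and "0 \<le> t"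
  shows "\<phi> (t + real n) = \<phi> t + real n * m"
proof (induction n)
  case (Suc n)
  have "\<phi> (t + real (Suc n)) = \<phi> ((t + real n) + 1)" by (simp add: algebra_simps)
  also have "\<dots> = \<phi> (t + real n) + m" using \<open>0 \<le> t\<close> by (intro drift) simp
  finally show ?case using Suc by (simp add: algebra_simps)
qed simp

lemma rising_sun:
  fixes \<phi> :: "real \<Rightarrow> real"
  assumes cont: "\<And>b. continuous_on {0..b} \<phi>"
    and drift: "\<And>t. 0 \<le> t \<Longrightarrow> \<phi> (t + 1) = \<phi> t + m" and "m < 0"
  obtains s where "0 \<le> s" "{\<phi> s + m .. \<phi> s} \<subseteq> \<phi> ` ({a. \<forall>t>a. \<phi> t < \<phi> a} \<inter> {s..s+1})"
proof -
  have cont': "continuous_on {a..b} \<phi>" if "0 \<le> a" for a b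
    using continuous_on_subset[OF cont[of b]] that by auto
  obtain x where x: "x \<in> {0..1}" "\<And>y. y \<in> {0..1} \<Longrightarrow> \<phi> y \<le> \<phi> x"
    using continuous_attains_sup[OF compact_Icc _ cont'[of 0 1]] by auto
  have beyond: "\<phi> t < \<phi> x" if "x + 1 < t" for t
  proof -
    define n where "n = nat \<lfloor>t\<rfloor>"
    have n: "1 \<le> real n" "t - real n \<in> {0..1}" using that x(1) by (simp_all add: n_def) linarith+
    have "\<phi> t = \<phi> (t - real n) + real n * m"
      using drift_shift_nat[of \<phi> m, OF drift, of "t - real n" n] n by simp
    also have "\<dots> < \<phi> x"
      using x(2)[OF n(2)] mult_pos_neg[of "real n" m] n(1) \<open>m < 0\<close> by linarith
    finally show ?thesis .
  qed
  obtain s where s: "s \<in> {x..x+1}" "\<phi> s = \<phi> x" "\<And>t. s < t \<Longrightarrow> \<phi> t < \<phi> s"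
    by (rule last_level_point[OF cont' _ _ _ beyond]) (use drift[of x] \<open>m < 0\<close> x(1) in auto)
  have "0 \<le> s" using s(1) x(1) by simp
  have "v \<in> \<phi> ` ({a. \<forall>t>a. \<phi> t < \<phi> a} \<inter> {s..s+1})" if "v \<in> {\<phi> s + m .. \<phi> s}" for v
  proof -
    have beyond: "\<phi> t < v" if "s + 1 < t" for t
      using s(3)[of "t - 1"] drift[of "t - 1"] that \<open>0 \<le> s\<close> \<open>v \<in> _\<close> by force
    obtain a where "a \<in> {s..s+1}" "\<phi> a = v" "\<And>t. a < t \<Longrightarrow> \<phi> t < \<phi> a"
      by (rule last_level_point[OF cont'[OF \<open>0 \<le> s\<close>] _ _ _ beyond]) (use drift[OF \<open>0 \<le> s\<close>] \<open>v \<in> _\<close> in auto)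
    then show ?thesis by blast
  qed
  then show ?thesis using that \<open>0 \<le> s\<close> by blast
qed

lemma periodic_negative_mean_not_negligible:
  fixes g :: "real \<Rightarrow> real"
  assumes per: "\<And>x. g (x + 1) = g x" and g: "g absolutely_integrable_on {0..1}"
    and negative: "integral {0..1} g < 0"
  shows "\<not> negligible {a. \<forall>t>a. integral {a..t} g < 0}"
proof
  assume negligible: "negligible {a. \<forall>t>a. integral {a..t} g < 0}"
  have abs_int: "g absolutely_integrable_on {a..b}" for a b
    using periodic_absolutely_integrable_on_interval[OF per g] .
  then have int: "g integrable_on {a..b}" for a b
    using set_lebesgue_integral_eq_integral(1) by blast
  define \<phi> where "\<phi> t = integral {0..t} g" for t
  have \<phi>_diff: "\<phi> t - \<phi> a = integral {a..t} g" if "0 \<le> a" "a \<le> t" for a t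
    using Henstock_Kurzweil_Integration.integral_combine[OF that int] by (simp add: \<phi>_def)
  have cont: "continuous_on {0..b} \<phi>" for b
    unfolding \<phi>_def by (rule indefinite_integral_continuous_1[OF int])
  have drift: "\<phi> (t + 1) = \<phi> t + integral {0..1} g" if "0 \<le> t" for t
    using \<phi>_diff[of t "t + 1"] periodic_integral_unit_interval[OF per int] that by simp
  obtain s where "0 \<le> s"
    and levels: "{\<phi> s + integral {0..1} g .. \<phi> s} \<subseteq> \<phi> ` ({a. \<forall>t>a. \<phi> t < \<phi> a} \<inter> {s..s+1})"
    using rising_sun[OF cont drift negative] by blast
  have "{a. \<forall>t>a. \<phi> t < \<phi> a} \<inter> {s..s+1} \<subseteq> {a. \<forall>t>a. integral {a..t} g < 0}"
  proof (intro subsetI CollectI allI impI)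
    fix a t assume "a \<in> {a. \<forall>t>a. \<phi> t < \<phi> a} \<inter> {s..s+1}" "a < t"
    then show "integral {a..t} g < 0"
      using \<phi>_diff[of a t] \<open>0 \<le> s\<close> by auto
  qed
  then have "negligible ({a. \<forall>t>a. \<phi> t < \<phi> a} \<inter> {s..s+1})"
    using negligible negligible_subset by blast
  moreover have "\<bar>\<phi> y - \<phi> x\<bar> \<le> integral {x..y} (\<lambda>t. \<bar>g t\<bar>)" if "s \<le> x" "x \<le> y" for x y
  proof -
    have abs_g: "(\<lambda>t. \<bar>g t\<bar>) integrable_on {x..y}"
      using abs_int[of x y] by (simp add: absolutely_integrable_on_def)
    then show ?thesis
      using \<phi>_diff[of x y] that \<open>0 \<le> s\<close>
        Henstock_Kurzweil_Integration.integral_norm_bound_integral[OF int[of x y] abs_g]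
      by simp
  qed
  ultimately have "negligible (\<phi> ` ({a. \<forall>t>a. \<phi> t < \<phi> a} \<inter> {s..s+1}))"
    using absolutely_integrable_abs[OF abs_int]
    by (intro negligible_image_if_integral_dominated[where h="\<lambda>t. \<bar>g t\<bar>" and \<alpha>=s and \<beta>="s+1"]) auto
  then have "negligible {\<phi> s + integral {0..1} g .. \<phi> s}"
    using levels negligible_subset by blast
  then show False
    using negative negligible_interval(1)[of "\<phi> s + integral {0..1} g" "\<phi> s"] by simp
qed

lemma right_averages_tendsto_ae:
  fixes f :: "real \<Rightarrow> 'a::euclidean_space"
  assumes "\<And>a b. f integrable_on {a..b}"
  obtains N where "negligible N"
    "\<And>x. x \<notin> N \<Longrightarrow> ((\<lambda>h. average {x..x+h} f) \<longlongrightarrow> f x) (at_right 0)"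
proof -
  obtain N where N: "negligible N"
    "\<And>x e. \<lbrakk>x \<notin> N; 0 < e\<rbrakk> \<Longrightarrow> \<exists>d>0. \<forall>h. 0 < h \<and> h < d \<longrightarrow>
        norm (integral (cbox x (x + h *\<^sub>R One)) f /\<^sub>R h ^ DIM(real) - f x) < e"
    using integrable_ccontinuous_explicit[of f] assms by auto
  have "((\<lambda>h. average {x..x+h} f) \<longlongrightarrow> f x) (at_right 0)" if "x \<notin> N" for x
    unfolding tendsto_iff dist_norm
  proof (intro allI impI)
    fix e :: real assume "e > 0"
    obtain d where "d > 0" and d: "\<forall>h. 0 < h \<and> h < d \<longrightarrow>
        norm (integral {x..x+h} f /\<^sub>R h - f x) < e"
      using N(2)[OF \<open>x \<notin> N\<close> \<open>e > 0\<close>] by auto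
    then show "\<forall>\<^sub>F h in at_right 0. norm (average {x..x+h} f - f x) < e"
      using d unfolding eventually_at_right_field by (auto simp: average_def divide_inverse_commute)
  qed
  with N(1) show ?thesis using that by blast
qed

lemma averages_stay_in_set:
  fixes psi :: "real \<Rightarrow> 'a::euclidean_space"
  assumes int: "\<And>a b. psi integrable_on {a..b}"
    and avoid: "\<And>t. a < t \<Longrightarrow> average {a..t} psi \<notin> frontier \<omega>"
    and start: "average {a..a+1} psi \<in> \<omega>" and t: "t \<in> {a<..a+1}"
  shows "average {a..t} psi \<in> \<omega>"
proof -
  define P where "P = (\<lambda>t. average {a..t} psi) ` {a<..a+1}"
  have "continuous_on {a<..a+1} (\<lambda>t. (1 / (t - a)) *\<^sub>R integral {a..t} psi)"
    using indefinite_integral_continuous_1[OF int, of a "a+1"]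
    by (intro continuous_intros) (auto elim: continuous_on_subset)
  then have "continuous_on {a<..a+1} (\<lambda>t. average {a..t} psi)"
    by (rule continuous_on_eq) (simp add: average_def)
  then have "connected P"
    unfolding P_def by (intro connected_continuous_image) (simp_all add: is_interval_connected)
  moreover have "P \<inter> \<omega> \<noteq> {}" using start by (force simp: P_def)
  moreover have "P \<inter> frontier \<omega> = {}" using avoid by (auto simp: P_def)
  ultimately have "P \<subseteq> \<omega>" using connected_Int_frontier by blast
  then show ?thesis using t by (auto simp: P_def)
qed

lemma periodic_mean_notin_region_below_hyperplane:
  fixes psi :: "real \<Rightarrow> 'a::euclidean_space"
  assumes per: "\<And>x. psi (x + 1) = psi x" and psi: "psi absolutely_integrable_on {0..1}"
    and outside: "\<And>x. psi x \<notin> closure \<omega>"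
    and below: "\<omega> \<subseteq> {y. l \<bullet> y < b}"
    and crossing: "\<And>a t. a < t \<Longrightarrow> average {a..t} psi \<in> frontier \<omega> \<Longrightarrow> l \<bullet> average {a..t} psi = b"
  shows "average {0..1} psi \<notin> \<omega>"
proof
  assume mean: "average {0..1} psi \<in> \<omega>"
  have int: "psi integrable_on {a..t}" for a t
    using periodic_integrable_on_interval[of psi, OF per] psi set_lebesgue_integral_eq_integral(1) by blast
  define g where "g = (\<lambda>t. l \<bullet> psi t - b)"
  have g_integral: "integral {a..t} g = (t - a) * (l \<bullet> average {a..t} psi - b)" if "a < t" for a t
  proof -
    have "(\<lambda>s. l \<bullet> psi s) integrable_on {a..t}"
      using integrable_linear[OF int bounded_linear_inner_right] by (simp add: o_def)
    then have "integral {a..t} g = integral {a..t} (\<lambda>s. l \<bullet> psi s) - integral {a..t} (\<lambda>s. b)"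
      unfolding g_def by (intro integral_diff) auto
    also have "\<dots> = l \<bullet> integral {a..t} psi - (t - a) * b"
      using integral_linear[OF int bounded_linear_inner_right, of a t l] that by (simp add: o_def)
    also have "\<dots> = (t - a) * (l \<bullet> average {a..t} psi - b)"
      using that by (simp add: average_def field_simps)
    finally show ?thesis .
  qed
  have "\<not> negligible {a. \<forall>t>a. integral {a..t} g < 0}"
  proof (rule periodic_negative_mean_not_negligible)
    show "g (x + 1) = g x" for x using per by (simp add: g_def)
    show "g absolutely_integrable_on {0..1}"
      unfolding g_def using absolutely_integrable_linear[OF psi bounded_linear_inner_right, of l]
      by (intro set_integral_diff(1)) (auto simp: o_def)
    show "integral {0..1} g < 0"
      using g_integral[of 0 1] mean below by auto
  qed
  moreover obtain N where "negligible N"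
    and lebesgue_points: "\<And>x. x \<notin> N \<Longrightarrow> ((\<lambda>h. average {x..x+h} psi) \<longlongrightarrow> psi x) (at_right 0)"
    using right_averages_tendsto_ae[OF int] by blast
  moreover have "{a. \<forall>t>a. integral {a..t} g < 0} \<subseteq> N"
  proof (intro subsetI, rule ccontr)
    fix a assume "a \<in> {a. \<forall>t>a. integral {a..t} g < 0}" "a \<notin> N"
    then have "l \<bullet> average {a..t} psi < b" if "a < t" for t
      using g_integral[OF that] that by (auto simp: mult_less_0_iff)
    then have avoid: "average {a..t} psi \<notin> frontier \<omega>" if "a < t" for t
      using crossing[OF that] that by fastforce
    have start: "average {a..a+1} psi \<in> \<omega>"
      using mean periodic_integral_unit_interval[of psi, OF per int] by (simp add: average_def)
    have "\<forall>\<^sub>F h in at_right 0. average {a..a+h} psi \<in> \<omega>"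
      using averages_stay_in_set[OF int avoid start]
      by (intro eventually_at_right_field[THEN iffD2] exI[of _ 1]) auto
    then have "\<forall>\<^sub>F h in at_right 0. average {a..a+h} psi \<in> closure \<omega>"
      by (rule eventually_mono) (use closure_subset in auto)
    then have "psi a \<in> closure \<omega>"
      using Lim_in_closed_set[OF closed_closure _ _ lebesgue_points[OF \<open>a \<notin> N\<close>]] by simp
    then show False using outside by blast
  qed
  ultimately show False using negligible_subset by blast
qed

lemma standing_assumptions_component_below_hyperplane:
  fixes OmO OmI :: "'a::euclidean_space set"
  assumes "standing_assumptions OmO OmI" and x: "x \<in> interior (convex hull OmI) - OmI"
  obtains \<omega> l b where "x \<in> \<omega>" "closure \<omega> \<subseteq> OmO" "\<omega> \<subseteq> {y. l \<bullet> y < b}"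
    "frontier \<omega> - OmI \<subseteq> {y. l \<bullet> y = b}"
proof -
  have hull_in: "closure (convex hull OmI) \<subseteq> OmO"
    and supporting: "\<forall>w \<in> components (interior (convex hull OmI) - OmI).
        \<exists>L. supporting_hyperplane (convex hull OmI) L \<and> frontier w - OmI \<subseteq> L"
    using assms(1) unfolding standing_assumptions_def by auto
  define \<omega> where "\<omega> = connected_component_set (interior (convex hull OmI) - OmI) x"
  have "\<omega> \<in> components (interior (convex hull OmI) - OmI)" and "x \<in> \<omega>"
    using x unfolding \<omega>_def by (auto intro: componentsI)
  have \<omega>_in: "\<omega> \<subseteq> interior (convex hull OmI)"
    using connected_component_subset unfolding \<omega>_def by blast
  obtain l b where L: "frontier \<omega> - OmI \<subseteq> {y. l \<bullet> y = b}" "l \<noteq> 0"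
    "\<forall>y\<in>convex hull OmI. l \<bullet> y \<le> b"
    using supporting \<open>\<omega> \<in> components _\<close> unfolding supporting_hyperplane_def by blast
  have "\<omega> \<subseteq> {y. l \<bullet> y < b}"
    using \<omega>_in interior_mono[of "convex hull OmI" "{y. l \<bullet> y \<le> b}"] L(3)
      interior_halfspace_le[OF L(2)]
    by auto
  moreover have "closure \<omega> \<subseteq> OmO"
    using closure_mono[OF subset_trans[OF \<omega>_in interior_subset]] hull_in by blast
  ultimately show ?thesis using that \<open>x \<in> \<omega>\<close> L(1) by blast
qed

theorem theorem1:
  fixes OmO OmI :: "'a::euclidean_space set" and psi :: "real \<Rightarrow> 'a"
  assumes "standing_assumptions OmO OmI"
    and "psi \<in> A_circ OmO OmI"
  shows "average {0..1} psi \<notin> interior (convex hull OmI)"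
proof
  assume mean: "average {0..1} psi \<in> interior (convex hull OmI)"
  have per: "\<And>x. psi (x + 1) = psi x" and psi: "psi absolutely_integrable_on {0..1}"
    and boundary: "\<And>x. psi x \<in> frontier OmO" and avoid: "\<And>a b. a < b \<Longrightarrow> average {a..b} psi \<notin> OmI"
    using assms(2) unfolding A_circ_def by auto
  have "average {0..1} psi \<in> interior (convex hull OmI) - OmI"
    using mean avoid[of 0 1] by simp
  then obtain \<omega> l b where \<omega>: "average {0..1} psi \<in> \<omega>" "closure \<omega> \<subseteq> OmO"
    "\<omega> \<subseteq> {y. l \<bullet> y < b}" "frontier \<omega> - OmI \<subseteq> {y. l \<bullet> y = b}"
    using standing_assumptions_component_below_hyperplane[OF assms(1)] by blast
  have "psi x \<notin> OmO" for x
    using boundary[of x] assms(1) by (simp add: frontier_def interior_open standing_assumptions_def)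
  then have "psi x \<notin> closure \<omega>" for x
    using \<omega>(2) by blast
  then show False
    using periodic_mean_notin_region_below_hyperplane[OF per psi _ \<omega>(3)] \<omega>(1,4) avoid by blast
qed

end
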